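(* Let $0<s<\tfrac12$. Let $T$ be the distribution on $\mathbb{R}^n$ given by $\langle T,\varphi\rangle=\int_{\mathbb{R}^n}\varphi\,dx$ and $S$ the distribution on $\mathbb{R}^{2n}$ given by $\langle\!\langle S,\Theta\rangle\!\rangle=\iint_{\mathbb{R}^{2n}}\frac{\Theta(x,y)-\Theta(x,x)}{|x-y|^{n+2s}}\,dx\,dy$. Then for every $\Phi\in\mathscr{C}_c^\infty(\mathbb{R}^{2n})$, $$Kir_{T,S}\Phi(x)=\int_{\mathbb{R}^n}\frac{\Phi(x,y)-\Phi(x,x)}{|x-y|^{n+2s}}\,dy.$$
   Context: $\mathscr{S}_1=\mathscr{C}_c^\infty(\mathbb{R}^n)$, $\mathscr{S}_2=\mathscr{C}_c^\infty(\mathbb{R}^{2n})$. A function $\psi$ is the Kirchhoff divergence $Kir_{T,S}\Phi$ if $\varphi\psi\in\mathscr{S}_1$ and $\langle T,\varphi\psi\rangle=\langle\!\langle S,\varphi\Phi\rangle\!\rangle$ for every $\varphi\in\mathscr{S}_1$, where $(\varphi\Phi)(x,y)=\varphi(x)\Phi(x,y)$. *)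

theory Defs
  imports "HOL-Analysis.Analysis"
begin

fun Ck :: "nat \<Rightarrow> ('a::euclidean_space \<Rightarrow> real) \<Rightarrow> bool" where
  "Ck 0 f = continuous_on UNIV f"
| "Ck (Suc k) f = (f differentiable_on UNIV \<and>
      (\<forall>b\<in>Basis. Ck k (\<lambda>x. frechet_derivative f (at x) b)))"

definition smooth_fun :: "('a::euclidean_space \<Rightarrow> real) \<Rightarrow> bool" where
  "smooth_fun f \<longleftrightarrow> (\<forall>k. Ck k f)"

definition test_fun :: "('a::euclidean_space \<Rightarrow> real) \<Rightarrow> bool" where
  "test_fun f \<longleftrightarrow> smooth_fun f \<and> bounded {x. f x \<noteq> 0}"

definition is_Kir ::
  "(('a::euclidean_space \<Rightarrow> real) \<Rightarrow> real) \<Rightarrow> (('a \<times> 'a \<Rightarrow> real) \<Rightarrow> real)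
   \<Rightarrow> ('a \<times> 'a \<Rightarrow> real) \<Rightarrow> ('a \<Rightarrow> real) \<Rightarrow> bool" where
  "is_Kir T S \<Phi> \<psi> \<longleftrightarrow>
     (\<forall>\<phi>. test_fun \<phi> \<longrightarrow>
        test_fun (\<lambda>x. \<phi> x * \<psi> x) \<and>
        T (\<lambda>x. \<phi> x * \<psi> x) = S (\<lambda>z. \<phi> (fst z) * \<Phi> z))"

end

theory Submission
  imports Defs
begin

text \<open>
  After the substitution \<open>y = x + h\<close> the candidate \<open>\<psi>\<close> is the integral of the increment
  \<open>\<Phi>(x, x + h) - \<Phi>(x, x)\<close> against \<open>|h|\<^sup>-\<^sup>p\<close>, \<open>p = n + 2s\<close>. The increment is
  \<open>O(min |h| 1)\<close> uniformly in \<open>x\<close> and \<open>n < p\<close>, so the double integral defining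
  \<open>\<langle>\<langle>S, \<phi>\<Phi>\<rangle>\<rangle>\<close> converges absolutely and Fubini turns it into \<open>\<langle>T, \<phi>\<psi>\<rangle>\<close>.

  The substance is that \<open>\<psi>\<close> is smooth, so that \<open>\<phi>\<psi>\<close> is again a test function.
  Differentiating under the integral in the direction \<open>v\<close> produces the same construction
  applied to the derivative of \<open>\<Phi>\<close> along \<open>(v, v)\<close>, which is again a test function, so
  induction on \<open>k\<close> gives \<open>\<psi> \<in> C\<^sup>k\<close>. The remainder of the first-order expansion is
  bounded by \<open>|v| min |v| (min |h| 1) \<le> |v|\<^sup>2\<^sup>-\<^sup>a min |h| 1\<^sup>a\<close>, and for \<open>2s < a < 1\<close>,
  which exists precisely because \<open>s < 1/2\<close>, the kernel \<open>min |h| 1\<^sup>a |h|\<^sup>-\<^sup>p\<close> is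
  integrable (by a dyadic decomposition into balls).
\<close>

lemma power_powr: "0 < x \<Longrightarrow> (x ^ n) powr y = (x powr y) ^ n"
  for x y :: real
  by (simp add: powr_power powr_powr mult.commute flip: powr_realpow)

lemma le_powr_if_le_one: "0 \<le> x \<Longrightarrow> x \<le> 1 \<Longrightarrow> a \<le> 1 \<Longrightarrow> x \<le> x powr a"
  for x a :: real
  using powr_mono'[of a 1 x] by (cases "x = 0") auto

lemma min_le_powr_mult_powr:
  fixes x m a :: real
  assumes "0 \<le> x" "0 \<le> m" "0 \<le> a" "a \<le> 1"
  shows "min x m \<le> x powr (1 - a) * m powr a"
proof -
  have recombine: "y powr (1 - a) * y powr a = y" if "0 \<le> y" for y
  proof -
    have "y powr (1 - a) * y powr a = y powr (1 - a + a)"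
      by (rule powr_add[symmetric])
    then show ?thesis
      using that by (cases "y = 0") auto
  qed
  show ?thesis
  proof (cases "x \<le> m")
    case True
    then have "min x m = x powr (1 - a) * x powr a"
      using recombine[OF assms(1)] by simp
    also have "\<dots> \<le> x powr (1 - a) * m powr a"
      using True assms by (intro mult_left_mono powr_mono2) auto
    finally show ?thesis .
  next
    case False
    then have "min x m = m powr (1 - a) * m powr a"
      using recombine[OF assms(2)] by simp
    also have "\<dots> \<le> x powr (1 - a) * m powr a"
      using False assms by (intro mult_right_mono powr_mono2) auto
    finally show ?thesis .
  qed
qed

lemma exists_dyadic_bracket:
  fixes t :: real
  assumes "1 \<le> t"
  obtains j :: nat where "2 ^ j \<le> t" "t < 2 ^ Suc j"
proof
  define j where "j = nat \<lfloor>log 2 t\<rfloor>"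
  have "\<lfloor>log 2 t\<rfloor> = int j"
    using assms by (simp add: j_def)
  then have "2 powr real j \<le> t \<and> t < 2 powr (real j + 1)"
    using assms by (subst (asm) floor_log_eq_powr_iff) auto
  then show "2 ^ j \<le> t" "t < 2 ^ Suc j"
    by (simp_all add: powr_realpow[symmetric] powr_add)
qed

lemma linear_eq_sum_Basis:
  fixes g :: "'a::euclidean_space \<Rightarrow> real"
  assumes "linear g"
  shows "g u = (\<Sum>b\<in>Basis. (u \<bullet> b) * g b)"
proof -
  have "g u = g (\<Sum>b\<in>Basis. (u \<bullet> b) *\<^sub>R b)"
    by (simp add: euclidean_representation)
  also have "\<dots> = (\<Sum>b\<in>Basis. (u \<bullet> b) * g b)"
    using assms by (simp add: linear_sum linear_scale)
  finally show ?thesis .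
qed

lemma abs_linear_le_sum_Basis:
  fixes g :: "'a::euclidean_space \<Rightarrow> real"
  assumes "linear g"
  shows "\<bar>g u\<bar> \<le> norm u * (\<Sum>b\<in>Basis. \<bar>g b\<bar>)"
proof -
  have "\<bar>g u\<bar> = \<bar>\<Sum>b\<in>Basis. (u \<bullet> b) * g b\<bar>"
    by (subst linear_eq_sum_Basis[OF assms]) simp
  also have "\<dots> \<le> (\<Sum>b\<in>Basis. norm u * \<bar>g b\<bar>)"
    by (rule order_trans[OF sum_abs sum_mono])
      (auto simp: abs_mult intro!: mult_right_mono Basis_le_norm)
  finally show ?thesis
    by (simp add: sum_distrib_left)
qed

lemma linear_integral:
  fixes F :: "'a::real_vector \<Rightarrow> 'b \<Rightarrow> real"
  assumes "\<And>v. integrable M (F v)" and "\<And>h. linear (\<lambda>v. F v h)"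
  shows "linear (\<lambda>v. integral\<^sup>L M (F v))"
proof (rule linearI)
  fix v w :: 'a and c :: real
  have "F (v + w) = (\<lambda>h. F v h + F w h)"
    by (rule ext) (rule linear_add[OF assms(2)])
  then show "integral\<^sup>L M (F (v + w)) = integral\<^sup>L M (F v) + integral\<^sup>L M (F w)"
    using assms(1) by simp
  have "F (c *\<^sub>R v) = (\<lambda>h. c * F v h)"
    by (rule ext) (simp add: linear_scale[OF assms(2)])
  then show "integral\<^sup>L M (F (c *\<^sub>R v)) = c *\<^sub>R integral\<^sup>L M (F v)"
    by simp
qed

lemma has_derivative_at_if_remainder_le:
  assumes L: "bounded_linear L" and e: "0 < e"
    and rem: "\<And>v. norm (f (x + v) - f x - L v) \<le> K * norm v * norm v powr e"
  shows "(f has_derivative L) (at x)"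
  unfolding has_derivative_at
proof (intro conjI L)
  show "((\<lambda>v. norm (f (x + v) - f x - L v) / norm v) \<longlongrightarrow> 0) (at 0)"
  proof (rule Lim_null_comparison)
    have "norm (f (x + v) - f x - L v) / norm v \<le> K * norm v powr e" if "v \<noteq> 0" for v
      using rem[of v] that by (simp add: divide_le_eq mult_ac)
    then show "\<forall>\<^sub>F v in at 0. norm (norm (f (x + v) - f x - L v) / norm v) \<le> K * norm v powr e"
      by (simp add: eventually_at_filter)
    have "((\<lambda>v. norm v powr e) \<longlongrightarrow> 0) (at 0)"
      by (rule tendsto_zero_powrI) (auto intro!: tendsto_eq_intros e)
    then show "((\<lambda>v. K * norm v powr e) \<longlongrightarrow> 0) (at 0)"
      by (rule tendsto_mult_right_zero)
  qed
qed

lemma lborel_integral_translate: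
  fixes f :: "'a::euclidean_space \<Rightarrow> real"
  assumes [measurable]: "f \<in> borel_measurable borel"
  shows "(\<integral>y. f y \<partial>lborel) = (\<integral>h. f (x + h) \<partial>lborel)"
    and "integrable lborel f \<longleftrightarrow> integrable lborel (\<lambda>h. f (x + h))"
proof -
  have "(+) x \<in> measurable lborel borel"
    by simp
  then show "(\<integral>y. f y \<partial>lborel) = (\<integral>h. f (x + h) \<partial>lborel)"
    and "integrable lborel f \<longleftrightarrow> integrable lborel (\<lambda>h. f (x + h))"
    using integral_distr[of "(+) x" lborel borel f] integrable_distr_eq[of "(+) x" lborel borel f]
    by (simp_all add: lborel_distr_plus)
qed

lemma emeasure_cball_le:
  fixes r :: real
  assumes "0 \<le> r"
  shows "emeasure lborel (cball (0::'a::euclidean_space) r) \<le> ennreal ((2 * r) ^ DIM('a))"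
proof -
  have "cball (0::'a) r \<subseteq> cbox (- (r *\<^sub>R One)) (r *\<^sub>R One)"
  proof
    fix x :: 'a
    assume "x \<in> cball 0 r"
    then have "\<bar>x \<bullet> b\<bar> \<le> r" if "b \<in> Basis" for b
      using Basis_le_norm[OF that, of x] by simp
    then show "x \<in> cbox (- (r *\<^sub>R One)) (r *\<^sub>R One)"
      by (force simp: mem_box abs_le_iff)
  qed
  then have "emeasure lborel (cball (0::'a) r)
               \<le> emeasure lborel (cbox (- (r *\<^sub>R One)) (r *\<^sub>R One) :: 'a set)"
    by (rule emeasure_mono) simp
  also have "\<dots> = ennreal ((2 * r) ^ DIM('a))"
    using assms by (simp add: emeasure_lborel_cbox_eq inner_diff_left inner_add_left)
  finally show ?thesis .
qed

lemma nn_integral_finite_if_bounded_by_cballs: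
  fixes f :: "'a::euclidean_space \<Rightarrow> ennreal" and c r :: "nat \<Rightarrow> real"
  assumes bound: "\<And>h. \<exists>j. f h \<le> ennreal (c j) * indicator (cball 0 (r j)) h"
    and c: "\<And>j. 0 \<le> c j" and r: "\<And>j. 0 \<le> r j"
    and summable: "summable (\<lambda>j. c j * (2 * r j) ^ DIM('a))"
  shows "(\<integral>\<^sup>+h. f h \<partial>lborel) < \<infinity>"
proof -
  define F where "F j h = ennreal (c j) * indicator (cball (0::'a) (r j)) h" for j h
  have "(\<integral>\<^sup>+h. f h \<partial>lborel) \<le> (\<integral>\<^sup>+h. (\<Sum>j. F j h) \<partial>lborel)"
  proof (rule nn_integral_mono)
    fix h
    obtain j where "f h \<le> F j h"
      using bound by (auto simp: F_def)
    also have "F j h \<le> (\<Sum>j. F j h)"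
      using sum_le_suminf[of "\<lambda>j. F j h" "{j}"] by (simp add: summableI)
    finally show "f h \<le> (\<Sum>j. F j h)" .
  qed
  also have "\<dots> = (\<Sum>j. \<integral>\<^sup>+h. F j h \<partial>lborel)"
    by (rule nn_integral_suminf)
      (auto simp: F_def intro!: borel_measurable_times_ennreal borel_measurable_indicator)
  also have "\<dots> = (\<Sum>j. ennreal (c j) * emeasure lborel (cball (0::'a) (r j)))"
    by (simp add: F_def nn_integral_cmult_indicator)
  also have "\<dots> \<le> (\<Sum>j. ennreal (c j * (2 * r j) ^ DIM('a)))"
  proof (rule suminf_le)
    fix j
    have "ennreal (c j) * emeasure lborel (cball (0::'a) (r j))
            \<le> ennreal (c j) * ennreal ((2 * r j) ^ DIM('a))"
      by (rule mult_left_mono[OF emeasure_cball_le[OF r]]) simp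
    also have "\<dots> = ennreal (c j * (2 * r j) ^ DIM('a))"
      by (rule ennreal_mult[symmetric]) (use c r in auto)
    finally show "ennreal (c j) * emeasure lborel (cball (0::'a) (r j))
                    \<le> ennreal (c j * (2 * r j) ^ DIM('a))" .
  qed (rule summableI)+
  also have "\<dots> < \<infinity>"
  proof -
    have "0 \<le> c j * (2 * r j) ^ DIM('a)" for j
      using c r by simp
    from ennreal_suminf_neq_top[OF summable this] show ?thesis
      by (simp add: less_top)
  qed
  finally show ?thesis .
qed

lemma set_integrable_norm_powr_cball:
  fixes \<beta> :: real
  assumes "0 \<le> \<beta>" "\<beta> < DIM('a)"
  shows "set_integrable lborel (cball 0 1) (\<lambda>h::'a::euclidean_space. norm h powr - \<beta>)"
  unfolding set_integrable_def
proof (rule integrableI_bounded)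
  define c where "c j = (2 powr \<beta>) ^ Suc j" for j :: nat
  define r where "r j = (1 / 2 :: real) ^ j" for j :: nat
  have bound: "\<exists>j. ennreal (norm (indicator (cball 0 1) h *\<^sub>R norm h powr - \<beta>))
               \<le> ennreal (c j) * indicator (cball 0 (r j)) h" for h :: 'a
  proof (cases "h \<in> cball 0 1 \<and> h \<noteq> 0")
    case True
    then have "1 \<le> 1 / norm h"
      by simp
    then obtain j where j: "2 ^ j \<le> 1 / norm h" "1 / norm h < 2 ^ Suc j"
      by (rule exists_dyadic_bracket)
    have "norm h powr - \<beta> = (1 / norm h) powr \<beta>"
      using True by (simp add: powr_minus_divide powr_divide)
    also have "\<dots> \<le> (2 ^ Suc j) powr \<beta>"
      using j True assms(1) by (intro powr_mono2) auto
    also have "\<dots> = c j"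
      by (simp add: c_def power_powr del: power_Suc)
    finally have "norm h powr - \<beta> \<le> c j" .
    moreover have "norm h \<le> r j"
      using j True by (simp add: r_def power_one_over field_simps)
    ultimately show ?thesis
      using True by (intro exI[of _ j]) (auto simp: indicator_def intro: ennreal_leI)
  qed (auto simp: indicator_def)
  have summable: "summable (\<lambda>j. c j * (2 * r j) ^ DIM('a))"
  proof -
    have "(\<lambda>j. c j * (2 * r j) ^ DIM('a))
            = (\<lambda>j. 2 powr \<beta> * 2 ^ DIM('a) * (2 powr \<beta> / 2 ^ DIM('a)) ^ j)"
      by (simp add: c_def r_def power_mult_distrib power_divide field_simps flip: power_mult)
    moreover have "2 powr \<beta> / 2 ^ DIM('a) < 1"
      using assms(2) by (simp add: powr_realpow[symmetric])
    ultimately show ?thesis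
      by (simp add: summable_geometric)
  qed
  show "(\<integral>\<^sup>+h. ennreal (norm (indicator (cball 0 1) h *\<^sub>R norm (h::'a) powr - \<beta>)) \<partial>lborel) < \<infinity>"
    by (rule nn_integral_finite_if_bounded_by_cballs[OF bound _ _ summable])
      (simp_all add: c_def r_def)
qed (intro borel_measurable_scaleR borel_measurable_indicator, simp, measurable)

lemma set_integrable_norm_powr_outside_cball:
  fixes p :: real
  assumes "DIM('a) < p"
  shows "set_integrable lborel (- cball 0 1) (\<lambda>h::'a::euclidean_space. norm h powr - p)"
  unfolding set_integrable_def
proof (rule integrableI_bounded)
  define c where "c j = (2 powr - p) ^ j" for j :: nat
  define r where "r j = (2 :: real) ^ Suc j" for j :: nat
  have bound: "\<exists>j. ennreal (norm (indicator (- cball 0 1) h *\<^sub>R norm h powr - p))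
                    \<le> ennreal (c j) * indicator (cball 0 (r j)) h" for h :: 'a
  proof (cases "h \<in> cball 0 1")
    case False
    then have "1 \<le> norm h"
      by simp
    then obtain j where j: "2 ^ j \<le> norm h" "norm h < 2 ^ Suc j"
      by (rule exists_dyadic_bracket)
    have "norm h powr - p \<le> (2 ^ j) powr - p"
      using j assms by (intro powr_mono2') auto
    also have "\<dots> = c j"
      by (simp add: c_def power_powr)
    finally show ?thesis
      using False j(2) by (intro exI[of _ j]) (auto simp: indicator_def r_def intro: ennreal_leI)
  qed (simp add: indicator_def)
  have summable: "summable (\<lambda>j. c j * (2 * r j) ^ DIM('a))"
  proof -
    have "(\<lambda>j. c j * (2 * r j) ^ DIM('a)) = (\<lambda>j. 4 ^ DIM('a) * (2 ^ DIM('a) * 2 powr - p) ^ j)"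
      by (simp add: c_def r_def power_mult_distrib field_simps flip: power_mult)
    moreover have "2 ^ DIM('a) * 2 powr - p < 1"
      using assms by (simp add: powr_realpow[symmetric] powr_minus_divide)
    ultimately show ?thesis
      by (simp add: summable_geometric)
  qed
  show "(\<integral>\<^sup>+h. ennreal (norm (indicator (- cball 0 1) h *\<^sub>R norm (h::'a) powr - p)) \<partial>lborel) < \<infinity>"
    by (rule nn_integral_finite_if_bounded_by_cballs[OF bound _ _ summable])
      (simp_all add: c_def r_def)
qed (intro borel_measurable_scaleR borel_measurable_indicator, simp, measurable)

section \<open>Smooth functions and test functions\<close>

definition dir_deriv :: "('a::euclidean_space \<Rightarrow> real) \<Rightarrow> 'a \<Rightarrow> 'a \<Rightarrow> real" where
  "dir_deriv f u x = frechet_derivative f (at x) u"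

lemma Ck_Suc_has_derivative:
  "Ck (Suc k) f \<Longrightarrow> (f has_derivative frechet_derivative f (at x)) (at x)"
  by (auto simp: differentiable_on_def frechet_derivative_works)

lemma Ck_SucI:
  assumes "\<And>x. (f has_derivative D x) (at x)" and "\<And>b. b \<in> Basis \<Longrightarrow> Ck k (\<lambda>x. D x b)"
  shows "Ck (Suc k) f"
proof -
  have "frechet_derivative f (at x) = D x" for x
    using assms(1) by (rule frechet_derivative_at[symmetric])
  then show ?thesis
    using assms by (auto simp: differentiable_on_def differentiable_def)
qed

lemma Ck_Suc_imp_Ck: "Ck (Suc k) f \<Longrightarrow> Ck k f"
  by (induction k arbitrary: f) (auto intro: differentiable_imp_continuous_on)

lemma Ck_const: "Ck k (\<lambda>x. c)"
  by (induction k arbitrary: c) (auto intro!: Ck_SucI derivative_eq_intros)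

lemma Ck_add: "Ck k f \<Longrightarrow> Ck k g \<Longrightarrow> Ck k (\<lambda>x. f x + g x)"
proof (induction k arbitrary: f g)
  case (Suc k)
  show ?case
    using Ck_Suc_has_derivative[OF Suc.prems(1)] Ck_Suc_has_derivative[OF Suc.prems(2)] Suc
    by (intro Ck_SucI[where
          D="\<lambda>x u. frechet_derivative f (at x) u + frechet_derivative g (at x) u"])
      (auto intro: has_derivative_add)
qed (auto intro!: continuous_on_add continuous_on_mult continuous_on_const)

lemma Ck_cmult: "Ck k f \<Longrightarrow> Ck k (\<lambda>x. c * f x)"
proof (induction k arbitrary: f)
  case (Suc k)
  show ?case
    using Ck_Suc_has_derivative[OF Suc.prems] Suc
    by (intro Ck_SucI[where D="\<lambda>x u. c * frechet_derivative f (at x) u"])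
      (auto intro: has_derivative_mult_right)
qed (auto intro!: continuous_on_add continuous_on_mult continuous_on_const)

lemma Ck_sum: "(\<And>i. i \<in> I \<Longrightarrow> Ck k (f i)) \<Longrightarrow> Ck k (\<lambda>x. \<Sum>i\<in>I. f i x)"
  by (induction I rule: infinite_finite_induct) (auto intro: Ck_const Ck_add)

lemma Ck_mult: "Ck k f \<Longrightarrow> Ck k g \<Longrightarrow> Ck k (\<lambda>x. f x * g x)"
proof (induction k arbitrary: f g)
  case (Suc k)
  let ?D = "\<lambda>x u. f x * frechet_derivative g (at x) u + frechet_derivative f (at x) u * g x"
  show ?case
  proof (rule Ck_SucI[where D="?D"])
    show "((\<lambda>x. f x * g x) has_derivative ?D x) (at x)" for x
      using Ck_Suc_has_derivative[OF Suc.prems(1)] Ck_Suc_has_derivative[OF Suc.prems(2)]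
      by (rule has_derivative_mult)
    show "Ck k (\<lambda>x. ?D x b)" if "b \<in> Basis" for b
      using Suc that by (intro Ck_add Suc.IH) (auto intro: Ck_Suc_imp_Ck)
  qed
qed (auto intro!: continuous_on_add continuous_on_mult continuous_on_const)

lemma test_fun_Ck: "test_fun f \<Longrightarrow> Ck k f"
  by (simp add: test_fun_def smooth_fun_def)

lemma test_fun_has_derivative:
  "test_fun f \<Longrightarrow> (f has_derivative frechet_derivative f (at x)) (at x)"
  using test_fun_Ck[of f "Suc 0"] by (rule Ck_Suc_has_derivative)

lemma test_fun_continuous_on: "test_fun f \<Longrightarrow> continuous_on UNIV f"
  using test_fun_Ck[of f 0] by simp

lemma test_fun_borel_measurable: "test_fun f \<Longrightarrow> f \<in> borel_measurable borel"
  by (rule borel_measurable_continuous_onI) (rule test_fun_continuous_on)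

lemma test_fun_support:
  assumes "test_fun f"
  shows "compact (closure {x. f x \<noteq> 0})" and "x \<notin> closure {x. f x \<noteq> 0} \<Longrightarrow> f x = 0"
  using assms closure_subset[of "{x. f x \<noteq> 0}"] by (auto simp: test_fun_def)

lemma test_fun_bounded: assumes "test_fun f" shows "\<exists>M. \<forall>x. \<bar>f x\<bar> \<le> M"
proof -
  define K where "K = closure {x. f x \<noteq> 0}"
  note K = test_fun_support[OF assms, folded K_def]
  have "continuous_on K f"
    using test_fun_continuous_on[OF assms] by (rule continuous_on_subset) simp
  then have "bounded (f ` K)"
    by (intro compact_imp_bounded compact_continuous_image K(1))
  then obtain M where "\<forall>y\<in>f ` K. norm y \<le> M"
    unfolding bounded_iff by blast
  then have "\<bar>f x\<bar> \<le> \<bar>M\<bar>" for x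
    using K(2)[of x] by (cases "x \<in> K") auto
  then show ?thesis by blast
qed

lemma test_fun_integrable: assumes "test_fun f" shows "integrable lborel f"
proof -
  define K where "K = closure {x. f x \<noteq> 0}"
  note K = test_fun_support[OF assms, folded K_def]
  have "continuous_on K f"
    using test_fun_continuous_on[OF assms] by (rule continuous_on_subset) simp
  then have "integrable lborel (\<lambda>x. indicator K x *\<^sub>R f x)"
    by (rule borel_integrable_compact[OF K(1)])
  also have "(\<lambda>x. indicator K x *\<^sub>R f x) = f"
    by (intro ext) (auto simp: indicator_def K(2))
  finally show ?thesis .
qed

lemma test_fun_mult_smooth:
  assumes "test_fun \<phi>" "\<And>k. Ck k \<psi>"
  shows "test_fun (\<lambda>x. \<phi> x * \<psi> x)"
proof -
  have "bounded {x. \<phi> x * \<psi> x \<noteq> 0}"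
    by (rule bounded_subset[of "{x. \<phi> x \<noteq> 0}"]) (use assms(1) in \<open>auto simp: test_fun_def\<close>)
  then show ?thesis
    using assms by (simp add: test_fun_def smooth_fun_def Ck_mult)
qed

lemma linear_dir_deriv: "test_fun f \<Longrightarrow> linear (\<lambda>u. dir_deriv f u x)"
  unfolding dir_deriv_def using test_fun_has_derivative has_derivative_linear by blast

lemma dir_deriv_eq_sum_Basis:
  "test_fun f \<Longrightarrow> dir_deriv f u x = (\<Sum>b\<in>Basis. (u \<bullet> b) * dir_deriv f b x)"
  by (rule linear_eq_sum_Basis[OF linear_dir_deriv])

lemma dir_deriv_eq_0_outside_support:
  assumes "x \<notin> closure {y. f y \<noteq> 0}"
  shows "dir_deriv f u x = 0"
proof -
  have "(f has_derivative (\<lambda>_. 0)) (at x)"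
  proof (rule has_derivative_transform_within_open[OF has_derivative_const])
    show "open (- closure {y. f y \<noteq> 0})"
      by blast
    show "x \<in> - closure {y. f y \<noteq> 0}"
      using assms by simp
    show "0 = f y" if "y \<in> - closure {y. f y \<noteq> 0}" for y
      using that closure_subset[of "{y. f y \<noteq> 0}"] by auto
  qed
  then have "frechet_derivative f (at x) = (\<lambda>_. 0)"
    by (rule frechet_derivative_at[symmetric])
  then show ?thesis
    by (simp add: dir_deriv_def)
qed

lemma test_fun_dir_deriv: assumes "test_fun f" shows "test_fun (dir_deriv f u)"
proof -
  have "Ck k (dir_deriv f u)" for k
  proof -
    have "Ck k (\<lambda>x. \<Sum>b\<in>Basis. (u \<bullet> b) * dir_deriv f b x)"
      using test_fun_Ck[OF assms, of "Suc k"] by (intro Ck_sum Ck_cmult) (simp add: dir_deriv_def)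
    then show ?thesis
      by (simp add: dir_deriv_eq_sum_Basis[OF assms, symmetric])
  qed
  moreover have "bounded {x. dir_deriv f u x \<noteq> 0}"
  proof (rule bounded_subset)
    show "bounded (closure {x. f x \<noteq> 0})"
      using assms by (simp add: test_fun_def bounded_closure)
    show "{x. dir_deriv f u x \<noteq> 0} \<subseteq> closure {x. f x \<noteq> 0}"
      using dir_deriv_eq_0_outside_support by blast
  qed
  ultimately show ?thesis
    by (simp add: test_fun_def smooth_fun_def)
qed

lemma test_fun_lipschitz:
  assumes "test_fun f" shows "\<exists>L\<ge>0. \<forall>x y. \<bar>f x - f y\<bar> \<le> L * norm (x - y)"
proof -
  have "\<forall>b\<in>Basis. \<exists>M. \<forall>x. \<bar>dir_deriv f b x\<bar> \<le> M"
    using test_fun_bounded[OF test_fun_dir_deriv[OF assms]] by blast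
  then obtain M where M: "\<And>b x. b \<in> Basis \<Longrightarrow> \<bar>dir_deriv f b x\<bar> \<le> M b"
    by metis
  define L where "L = (\<Sum>b\<in>Basis. M b)"
  have onorm_bound: "onorm (frechet_derivative f (at x)) \<le> L" for x
  proof (rule onorm_le)
    fix u
    have "\<bar>dir_deriv f u x\<bar> \<le> norm u * (\<Sum>b\<in>Basis. \<bar>dir_deriv f b x\<bar>)"
      using abs_linear_le_sum_Basis[OF linear_dir_deriv[OF assms]] .
    also have "\<dots> \<le> norm u * L"
      unfolding L_def by (intro mult_left_mono sum_mono M) auto
    finally show "norm (frechet_derivative f (at x) u) \<le> L * norm u"
      by (simp add: dir_deriv_def mult.commute)
  qed
  have "norm (f x - f y) \<le> L * norm (x - y)" for x y
  proof (rule differentiable_bound[where S=UNIV and f'="\<lambda>x. frechet_derivative f (at x)"])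
    show "(f has_derivative frechet_derivative f (at z)) (at z within UNIV)" for z
      using test_fun_has_derivative[OF assms] by simp
  qed (use onorm_bound in auto)
  moreover have "0 \<le> L"
    unfolding L_def using M by (intro sum_nonneg) (meson abs_ge_zero order_trans)
  ultimately show ?thesis
    by (metis real_norm_def)
qed

section \<open>A truncated Riesz kernel\<close>

definition cutoff_kernel :: "real \<Rightarrow> real \<Rightarrow> 'a::real_normed_vector \<Rightarrow> real" where
  "cutoff_kernel a p h = min (norm h) 1 powr a / norm h powr p"

lemma cutoff_kernel_eq:
  "cutoff_kernel a p h =
     indicator (cball 0 1) h *\<^sub>R norm h powr - (p - a)
       + indicator (- cball 0 1) h *\<^sub>R norm h powr - p"
  by (cases "norm h \<le> 1")
    (auto simp: cutoff_kernel_def indicator_def powr_diff powr_minus_divide min_def)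

lemma cutoff_kernel_integrable:
  fixes a p :: real
  assumes "0 \<le> p - a" "p - a < DIM('a)" "DIM('a) < p"
  shows "integrable lborel (cutoff_kernel a p :: 'a::euclidean_space \<Rightarrow> real)"
  unfolding cutoff_kernel_eq[abs_def]
  using set_integrable_norm_powr_cball[OF assms(1,2)]
    set_integrable_norm_powr_outside_cball[OF assms(3)]
  unfolding set_integrable_def by (rule Bochner_Integration.integrable_add)

lemma exists_integrable_cutoff_kernel:
  fixes p :: real
  assumes "DIM('a) < p" "p < DIM('a) + 1"
  obtains a where "0 < a" "a < 1"
    and "integrable lborel (cutoff_kernel a p :: 'a::euclidean_space \<Rightarrow> real)"
proof -
  define a where "a = (p - DIM('a) + 1) / 2"
  have "1 \<le> real DIM('a)"
    by (simp add: DIM_positive Suc_leI)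
  then have "1 < p"
    using assms(1) by linarith
  then have a: "0 < a" "a < 1" "0 \<le> p - a" "p - a < DIM('a)"
    using assms by (simp_all add: a_def field_simps)
  show ?thesis
    by (rule that[OF a(1,2) cutoff_kernel_integrable[OF a(3,4) assms(1)]])
qed

lemma cutoff_kernel_dominated:
  fixes g :: "'a::euclidean_space \<Rightarrow> real"
  assumes K: "integrable lborel (cutoff_kernel a p :: 'a \<Rightarrow> real)"
    and g: "g \<in> borel_measurable lborel"
    and bound: "\<And>h. \<bar>g h\<bar> \<le> M * min (norm h) 1 powr a"
  shows "integrable lborel (\<lambda>h. g h / norm h powr p)"
    and "(\<integral>h. \<bar>g h / norm h powr p\<bar> \<partial>lborel)
           \<le> M * integral\<^sup>L lborel (cutoff_kernel a p :: 'a \<Rightarrow> real)"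
proof -
  have le: "\<bar>g h / norm h powr p\<bar> \<le> M * cutoff_kernel a p h" for h
    using divide_right_mono[OF bound[of h], of "norm h powr p"]
    by (simp add: cutoff_kernel_def)
  have KM: "integrable lborel (\<lambda>h::'a. M * cutoff_kernel a p h)"
    using K by auto
  show "integrable lborel (\<lambda>h. g h / norm h powr p)"
  proof (rule Bochner_Integration.integrable_bound[OF KM])
    show "(\<lambda>h. g h / norm h powr p) \<in> borel_measurable lborel"
      using g by measurable
    show "AE h in lborel. norm (g h / norm h powr p) \<le> norm (M * cutoff_kernel a p h)"
      using le by (intro AE_I2) (metis abs_ge_self order_trans real_norm_def)
  qed
  then have "(\<integral>h. \<bar>g h / norm h powr p\<bar> \<partial>lborel) \<le> (\<integral>h. M * cutoff_kernel a p (h::'a) \<partial>lborel)"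
    by (rule integral_mono[OF integrable_abs KM]) (rule le)
  then show "(\<integral>h. \<bar>g h / norm h powr p\<bar> \<partial>lborel)
               \<le> M * integral\<^sup>L lborel (cutoff_kernel a p :: 'a \<Rightarrow> real)"
    by simp
qed

section \<open>The nonlocal divergence\<close>

text \<open>
  \<open>diag_incr \<Phi> x h\<close> is the numerator \<open>\<Phi>(x, y) - \<Phi>(x, x)\<close> in the variable \<open>h = y - x\<close>;
  with \<open>p = n + 2s\<close>, \<open>nonlocal_div p \<Phi>\<close> is the function \<open>\<psi>\<close> of the statement.
\<close>

definition diag_incr :: "('a::real_vector \<times> 'a \<Rightarrow> real) \<Rightarrow> 'a \<Rightarrow> 'a \<Rightarrow> real" where
  "diag_incr \<Phi> x h = \<Phi> (x, x + h) - \<Phi> (x, x)"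

definition nonlocal_div :: "real \<Rightarrow> ('a::euclidean_space \<times> 'a \<Rightarrow> real) \<Rightarrow> 'a \<Rightarrow> real" where
  "nonlocal_div p \<Phi> x = (\<integral>h. diag_incr \<Phi> x h / norm h powr p \<partial>lborel)"

lemma abs_diag_incr_le:
  fixes \<Phi> :: "'a::real_normed_vector \<times> 'a \<Rightarrow> real"
  assumes "0 \<le> L" and lip: "\<And>a b. \<bar>\<Phi> a - \<Phi> b\<bar> \<le> L * norm (a - b)" and bnd: "\<And>a. \<bar>\<Phi> a\<bar> \<le> M"
  shows "\<bar>diag_incr \<Phi> x h\<bar> \<le> (L + 2 * M) * min (norm h) 1"
proof (cases "norm h \<le> 1")
  case True
  have "\<bar>diag_incr \<Phi> x h\<bar> \<le> L * norm h"
    using lip[of "(x, x + h)" "(x, x)"] by (simp add: diag_incr_def)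
  also have "\<dots> \<le> (L + 2 * M) * norm h"
    using bnd[of "(x, x)"] by (intro mult_right_mono) auto
  finally show ?thesis
    using True by (simp add: min_def)
next
  case False
  have "\<bar>diag_incr \<Phi> x h\<bar> \<le> 2 * M"
    using bnd[of "(x, x + h)"] bnd[of "(x, x)"] by (simp add: diag_incr_def)
  then show ?thesis
    using False \<open>0 \<le> L\<close> by (simp add: min_def)
qed

lemma abs_diag_incr_diff_le:
  fixes \<Phi> :: "'a::real_normed_vector \<times> 'a \<Rightarrow> real"
  assumes "0 \<le> L" and lip: "\<And>a b. \<bar>\<Phi> a - \<Phi> b\<bar> \<le> L * norm (a - b)"
  shows "\<bar>diag_incr \<Phi> z h - diag_incr \<Phi> x h\<bar> \<le> 4 * L * norm (z - x)"
proof -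
  have "norm ((z, z + h) - (x, x + h)) \<le> 2 * norm (z - x)"
    and "norm ((z, z) - (x, x)) \<le> 2 * norm (z - x)"
    using norm_Pair_le[of "z - x" "z - x"] by simp_all
  then have "L * norm ((z, z + h) - (x, x + h)) \<le> L * (2 * norm (z - x))"
    and "L * norm ((z, z) - (x, x)) \<le> L * (2 * norm (z - x))"
    using \<open>0 \<le> L\<close> by (simp_all add: mult_left_mono)
  then show ?thesis
    using lip[of "(z, z + h)" "(x, x + h)"] lip[of "(z, z)" "(x, x)"] unfolding diag_incr_def
    by linarith
qed

lemma diag_incr_bounds:
  fixes \<Phi> :: "'a::euclidean_space \<times> 'a \<Rightarrow> real"
  assumes "test_fun \<Phi>"
  shows "\<exists>C\<ge>0. (\<forall>x h. \<bar>diag_incr \<Phi> x h\<bar> \<le> C * min (norm h) 1) \<and>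
           (\<forall>x z h. \<bar>diag_incr \<Phi> z h - diag_incr \<Phi> x h\<bar> \<le> C * min (norm (z - x)) (min (norm h) 1))"
proof -
  obtain L where L: "0 \<le> L" "\<And>a b. \<bar>\<Phi> a - \<Phi> b\<bar> \<le> L * norm (a - b)"
    using test_fun_lipschitz[OF assms] by blast
  obtain M where M: "\<And>a. \<bar>\<Phi> a\<bar> \<le> M"
    using test_fun_bounded[OF assms] by blast
  define C where "C = 4 * (L + M)"
  have "0 \<le> M"
    using M[of undefined] by linarith
  then have C: "0 \<le> C" "2 * (L + 2 * M) \<le> C" "4 * L \<le> C"
    using L(1) by (simp_all add: C_def)
  have incr: "2 * \<bar>diag_incr \<Phi> x h\<bar> \<le> C * min (norm h) 1" for x h
  proof -
    have "2 * \<bar>diag_incr \<Phi> x h\<bar> \<le> 2 * ((L + 2 * M) * min (norm h) 1)"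
      using abs_diag_incr_le[OF L M, of x h] by (rule mult_left_mono) simp
    also have "\<dots> \<le> C * min (norm h) 1"
      unfolding mult.assoc[symmetric] by (rule mult_right_mono[OF C(2)]) simp
    finally show ?thesis .
  qed
  have "\<bar>diag_incr \<Phi> z h - diag_incr \<Phi> x h\<bar> \<le> C * min (norm (z - x)) (min (norm h) 1)" for x z h
  proof (cases "norm (z - x) \<le> min (norm h) 1")
    case True
    then show ?thesis
      using abs_diag_incr_diff_le[OF L, of z h x] mult_right_mono[OF C(3), of "norm (z - x)"]
      by (simp add: min_absorb1)
  next
    case False
    then have "min (norm (z - x)) (min (norm h) 1) = min (norm h) 1"
      by (intro min_absorb2) linarith
    moreover have "\<bar>diag_incr \<Phi> z h - diag_incr \<Phi> x h\<bar> \<le> \<bar>diag_incr \<Phi> z h\<bar> + \<bar>diag_incr \<Phi> x h\<bar>"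
      by (rule abs_triangle_ineq4)
    ultimately show ?thesis
      using incr[of z h] incr[of x h] by simp
  qed
  moreover have "\<bar>diag_incr \<Phi> x h\<bar> \<le> C * min (norm h) 1" for x h
    using incr[of x h] by (simp add: C(1))
  ultimately show ?thesis
    using C(1) by blast
qed

lemma diag_incr_has_derivative:
  assumes "test_fun \<Phi>"
  shows "((\<lambda>y. diag_incr \<Phi> y h) has_derivative (\<lambda>u. diag_incr (dir_deriv \<Phi> (u, u)) y h)) (at y)"
proof -
  have pair: "((\<lambda>y. (y, y + c)) has_derivative (\<lambda>u. (u, u))) (at y)" for c
    by (auto intro!: derivative_eq_intros)
  have "((\<lambda>y. \<Phi> (y, y + c)) has_derivative (\<lambda>u. dir_deriv \<Phi> (u, u) (y, y + c))) (at y)" for c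
    using has_derivative_compose[OF pair test_fun_has_derivative[OF assms]]
    by (simp add: dir_deriv_def)
  from has_derivative_diff[OF this[of h] this[of 0]] show ?thesis
    by (simp add: diag_incr_def)
qed

lemma linear_diag_incr_dir_deriv:
  assumes "test_fun \<Phi>"
  shows "linear (\<lambda>u. diag_incr (dir_deriv \<Phi> (u, u)) x h)"
proof -
  have "linear (\<lambda>u::'a. (u, u))"
    by (rule linearI) simp_all
  then have lin: "linear (\<lambda>u. dir_deriv \<Phi> (u, u) y)" for y
    using linear_compose[OF _ linear_dir_deriv[OF assms]] by (simp add: o_def)
  show ?thesis
    unfolding diag_incr_def by (rule linear_compose_sub[OF lin lin])
qed

lemma diag_incr_dir_deriv_bounds:
  fixes \<Phi> :: "'a::euclidean_space \<times> 'a \<Rightarrow> real"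
  assumes "test_fun \<Phi>"
  obtains C where "0 \<le> C"
    and "\<And>u x h. \<bar>diag_incr (dir_deriv \<Phi> (u, u)) x h\<bar> \<le> C * norm u * min (norm h) 1"
    and "\<And>u x z h. \<bar>diag_incr (dir_deriv \<Phi> (u, u)) z h - diag_incr (dir_deriv \<Phi> (u, u)) x h\<bar>
                     \<le> C * norm u * min (norm (z - x)) (min (norm h) 1)"
proof -
  have "\<exists>C\<ge>0. (\<forall>x h. \<bar>diag_incr (dir_deriv \<Phi> (b, b)) x h\<bar> \<le> C * min (norm h) 1) \<and>
          (\<forall>x z h. \<bar>diag_incr (dir_deriv \<Phi> (b, b)) z h - diag_incr (dir_deriv \<Phi> (b, b)) x h\<bar>
                     \<le> C * min (norm (z - x)) (min (norm h) 1))" for b :: 'a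
    using diag_incr_bounds[OF test_fun_dir_deriv[OF assms]] .
  then obtain Cb where Cb: "\<And>b. 0 \<le> Cb b"
    "\<And>b x h. \<bar>diag_incr (dir_deriv \<Phi> (b, b)) x h\<bar> \<le> Cb b * min (norm h) 1"
    "\<And>b x z h. \<bar>diag_incr (dir_deriv \<Phi> (b, b)) z h - diag_incr (dir_deriv \<Phi> (b, b)) x h\<bar>
                 \<le> Cb b * min (norm (z - x)) (min (norm h) 1)"
    by metis
  define C where "C = (\<Sum>b\<in>Basis. Cb b)"
  have linear_bound: "\<bar>g u\<bar> \<le> C * norm u * m"
    if "linear g" "\<And>b. \<bar>g b\<bar> \<le> Cb b * m" for g :: "'a \<Rightarrow> real" and u m
  proof -
    have "\<bar>g u\<bar> \<le> norm u * (\<Sum>b\<in>Basis. \<bar>g b\<bar>)"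
      by (rule abs_linear_le_sum_Basis[OF that(1)])
    also have "\<dots> \<le> norm u * (\<Sum>b\<in>Basis. Cb b * m)"
      by (intro mult_left_mono sum_mono that(2)) auto
    finally show ?thesis
      by (simp add: C_def mult_ac flip: sum_distrib_left)
  qed
  show ?thesis
  proof
    show "0 \<le> C"
      by (simp add: C_def sum_nonneg Cb(1))
    show "\<bar>diag_incr (dir_deriv \<Phi> (u, u)) x h\<bar> \<le> C * norm u * min (norm h) 1" for u x h
      by (rule linear_bound[OF linear_diag_incr_dir_deriv[OF assms] Cb(2)])
    show "\<bar>diag_incr (dir_deriv \<Phi> (u, u)) z h - diag_incr (dir_deriv \<Phi> (u, u)) x h\<bar>
            \<le> C * norm u * min (norm (z - x)) (min (norm h) 1)" for u x z h
      using linear_compose_sub[OF linear_diag_incr_dir_deriv[OF assms]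
          linear_diag_incr_dir_deriv[OF assms]]
      by (rule linear_bound) (rule Cb(3))
  qed
qed

lemma diag_incr_linearization_bound:
  fixes \<Phi> :: "'a::euclidean_space \<times> 'a \<Rightarrow> real"
  assumes \<Phi>: "test_fun \<Phi>" and "0 \<le> C"
    and bound: "\<And>u x z. \<bar>diag_incr (dir_deriv \<Phi> (u, u)) z h - diag_incr (dir_deriv \<Phi> (u, u)) x h\<bar>
                          \<le> C * norm u * min (norm (z - x)) m"
  shows "\<bar>diag_incr \<Phi> (x + v) h - diag_incr \<Phi> x h - diag_incr (dir_deriv \<Phi> (v, v)) x h\<bar>
           \<le> C * norm v * min (norm v) m"
proof -
  let ?D = "\<lambda>y u. diag_incr (dir_deriv \<Phi> (u, u)) y h"
  have "norm (diag_incr \<Phi> (x + v) h - diag_incr \<Phi> x h - ?D x (x + v - x))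
          \<le> norm (x + v - x) * (C * min (norm v) m)"
  proof (rule differentiable_bound_linearization[where S="cball x (norm v)" and f'="?D"])
    show "x + t *\<^sub>R (x + v - x) \<in> cball x (norm v)" if "t \<in> {0..1}" for t
      using that mult_left_le_one_le[of "norm v" t] by (auto simp: dist_norm)
    show "((\<lambda>y. diag_incr \<Phi> y h) has_derivative ?D y) (at y within cball x (norm v))" for y
      by (rule has_derivative_at_withinI[OF diag_incr_has_derivative[OF \<Phi>]])
    show "onorm (?D y - ?D x) \<le> C * min (norm v) m" if "y \<in> cball x (norm v)" for y
    proof (rule onorm_le)
      fix u :: 'a
      have "norm (y - x) \<le> norm v"
        using that by (simp add: dist_norm norm_minus_commute)
      then have "C * norm u * min (norm (y - x)) m \<le> C * norm u * min (norm v) m"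
        using \<open>0 \<le> C\<close> by (intro mult_left_mono) auto
      then show "norm ((?D y - ?D x) u) \<le> C * min (norm v) m * norm u"
        using bound[of u y x] by (simp add: mult_ac)
    qed
  qed simp
  then show ?thesis
    by (simp add: mult_ac)
qed

lemma diag_incr_div_integrable_bounded:
  fixes \<Phi> :: "'a::euclidean_space \<times> 'a \<Rightarrow> real" and p :: real
  assumes "test_fun \<Phi>" "DIM('a) < p" "p < DIM('a) + 1"
  obtains B where "\<And>x. integrable lborel (\<lambda>h. diag_incr \<Phi> x h / norm h powr p)"
    and "\<And>x. (\<integral>h. \<bar>diag_incr \<Phi> x h / norm h powr p\<bar> \<partial>lborel) \<le> B"
proof -
  obtain a where a: "0 < a" "a < 1" and K: "integrable lborel (cutoff_kernel a p :: 'a \<Rightarrow> real)"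
    using exists_integrable_cutoff_kernel[OF assms(2,3)] by blast
  obtain C where C: "0 \<le> C" "\<And>x h. \<bar>diag_incr \<Phi> x h\<bar> \<le> C * min (norm h) 1"
    using diag_incr_bounds[OF assms(1)] by blast
  have [measurable]: "\<Phi> \<in> borel_measurable borel"
    by (rule test_fun_borel_measurable[OF assms(1)])
  have meas: "diag_incr \<Phi> x \<in> borel_measurable lborel" for x
    unfolding diag_incr_def by measurable
  have "\<bar>diag_incr \<Phi> x h\<bar> \<le> C * min (norm h) 1 powr a" for x h
    using C(2)[of x h] mult_left_mono[OF le_powr_if_le_one[of "min (norm h) 1" a] C(1)] a
    by simp
  from cutoff_kernel_dominated[OF K meas this] show ?thesis
    by (rule that)
qed

lemma nonlocal_div_remainder_bound:
  fixes \<Phi> :: "'a::euclidean_space \<times> 'a \<Rightarrow> real" and p :: real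
  assumes \<Phi>: "test_fun \<Phi>" and p: "DIM('a) < p" "p < DIM('a) + 1"
  obtains a B where "a < 1"
    and "\<And>x v. \<bar>nonlocal_div p \<Phi> (x + v) - nonlocal_div p \<Phi> x
                   - nonlocal_div p (dir_deriv \<Phi> (v, v)) x\<bar>
                 \<le> B * norm v * norm v powr (1 - a)"
proof -
  obtain a where a: "0 < a" "a < 1" and K: "integrable lborel (cutoff_kernel a p :: 'a \<Rightarrow> real)"
    using exists_integrable_cutoff_kernel[OF p] by blast
  define I where "I = integral\<^sup>L lborel (cutoff_kernel a p :: 'a \<Rightarrow> real)"
  obtain C where C: "0 \<le> C"
    "\<And>u x z h. \<bar>diag_incr (dir_deriv \<Phi> (u, u)) z h - diag_incr (dir_deriv \<Phi> (u, u)) x h\<bar>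
                 \<le> C * norm u * min (norm (z - x)) (min (norm h) 1)"
    using diag_incr_dir_deriv_bounds[OF \<Phi>] by metis
  have int: "integrable lborel (\<lambda>h. diag_incr \<Psi> y h / norm h powr p)"
    if "test_fun \<Psi>" for \<Psi> and y :: 'a
    using diag_incr_div_integrable_bounded[OF that p] by metis
  have "\<bar>nonlocal_div p \<Phi> (x + v) - nonlocal_div p \<Phi> x - nonlocal_div p (dir_deriv \<Phi> (v, v)) x\<bar>
          \<le> C * I * norm v * norm v powr (1 - a)" for x v
  proof -
    let ?R = "\<lambda>h. diag_incr \<Phi> (x + v) h - diag_incr \<Phi> x h - diag_incr (dir_deriv \<Phi> (v, v)) x h"
    have [measurable]: "\<Phi> \<in> borel_measurable borel" "dir_deriv \<Phi> (v, v) \<in> borel_measurable borel"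
      by (intro test_fun_borel_measurable test_fun_dir_deriv \<Phi>)+
    have "nonlocal_div p \<Phi> (x + v) - nonlocal_div p \<Phi> x - nonlocal_div p (dir_deriv \<Phi> (v, v)) x
            = (\<integral>h. ?R h / norm h powr p \<partial>lborel)"
      unfolding nonlocal_div_def diff_divide_distrib
      using int[OF \<Phi>] int[OF test_fun_dir_deriv[OF \<Phi>]] by simp
    moreover have "(\<integral>h. \<bar>?R h / norm h powr p\<bar> \<partial>lborel) \<le> C * norm v * norm v powr (1 - a) * I"
    proof (rule cutoff_kernel_dominated(2)[OF K, folded I_def])
      show "?R \<in> borel_measurable lborel"
        unfolding diag_incr_def by measurable
      fix h
      have "\<bar>?R h\<bar> \<le> C * norm v * min (norm v) (min (norm h) 1)"
        by (rule diag_incr_linearization_bound[OF \<Phi> C])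
      also have "\<dots> \<le> C * norm v * (norm v powr (1 - a) * min (norm h) 1 powr a)"
        using C(1) a by (intro mult_left_mono min_le_powr_mult_powr) auto
      finally show "\<bar>?R h\<bar> \<le> C * norm v * norm v powr (1 - a) * min (norm h) 1 powr a"
        by (simp add: mult_ac)
    qed
    ultimately show ?thesis
      using integral_norm_bound[of lborel "\<lambda>h. ?R h / norm h powr p"] by (simp add: mult_ac)
  qed
  then show ?thesis
    by (rule that[OF a(2)])
qed

lemma linear_nonlocal_div_dir_deriv:
  fixes \<Phi> :: "'a::euclidean_space \<times> 'a \<Rightarrow> real" and p :: real
  assumes \<Phi>: "test_fun \<Phi>" and p: "DIM('a) < p" "p < DIM('a) + 1"
  shows "linear (\<lambda>v. nonlocal_div p (dir_deriv \<Phi> (v, v)) x)"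
  unfolding nonlocal_div_def
proof (rule linear_integral)
  show "integrable lborel (\<lambda>h. diag_incr (dir_deriv \<Phi> (v, v)) x h / norm h powr p)" for v
    using diag_incr_div_integrable_bounded[OF test_fun_dir_deriv[OF \<Phi>] p] by metis
  show "linear (\<lambda>v. diag_incr (dir_deriv \<Phi> (v, v)) x h / norm h powr p)" for h
    using linear_compose_scale_right[OF linear_diag_incr_dir_deriv[OF \<Phi>],
        of "inverse (norm h powr p)"]
    by (simp add: divide_inverse mult.commute)
qed

lemma nonlocal_div_has_derivative:
  fixes \<Phi> :: "'a::euclidean_space \<times> 'a \<Rightarrow> real" and p :: real
  assumes \<Phi>: "test_fun \<Phi>" and p: "DIM('a) < p" "p < DIM('a) + 1"
  shows "(nonlocal_div p \<Phi> has_derivative (\<lambda>v. nonlocal_div p (dir_deriv \<Phi> (v, v)) x)) (at x)"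
proof -
  obtain a B where "a < 1"
    and "\<And>v. \<bar>nonlocal_div p \<Phi> (x + v) - nonlocal_div p \<Phi> x - nonlocal_div p (dir_deriv \<Phi> (v, v)) x\<bar>
              \<le> B * norm v * norm v powr (1 - a)"
    using nonlocal_div_remainder_bound[OF \<Phi> p] by metis
  moreover have "bounded_linear (\<lambda>v. nonlocal_div p (dir_deriv \<Phi> (v, v)) x)"
    using linear_nonlocal_div_dir_deriv[OF \<Phi> p] by (simp add: linear_conv_bounded_linear)
  ultimately show ?thesis
    by (intro has_derivative_at_if_remainder_le[where e="1 - a"]) auto
qed

lemma nonlocal_div_Ck:
  fixes \<Phi> :: "'a::euclidean_space \<times> 'a \<Rightarrow> real" and p :: real
  assumes "test_fun \<Phi>" and p: "DIM('a) < p" "p < DIM('a) + 1"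
  shows "Ck k (nonlocal_div p \<Phi>)"
  using assms(1)
proof (induction k arbitrary: \<Phi>)
  case 0
  then show ?case
    using nonlocal_div_has_derivative[OF 0 p]
    by (auto intro: continuous_at_imp_continuous_on has_derivative_continuous)
next
  case (Suc k)
  show ?case
    by (rule Ck_SucI[OF nonlocal_div_has_derivative[OF Suc.prems p]])
      (rule Suc.IH[OF test_fun_dir_deriv[OF Suc.prems]])
qed

lemma nonlocal_div_eq_integral:
  fixes \<Phi> :: "'a::euclidean_space \<times> 'a \<Rightarrow> real"
  assumes "test_fun \<Phi>"
  shows "nonlocal_div p \<Phi> x = (\<integral>y. (\<Phi> (x, y) - \<Phi> (x, x)) / norm (x - y) powr p \<partial>lborel)"
proof -
  have [measurable]: "\<Phi> \<in> borel_measurable borel"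
    by (rule test_fun_borel_measurable[OF assms])
  show ?thesis
    using lborel_integral_translate(1)[of "\<lambda>y. (\<Phi> (x, y) - \<Phi> (x, x)) / norm (x - y) powr p" x]
    by (simp add: nonlocal_div_def diag_incr_def)
qed

lemma integrable_pair_offdiag:
  fixes \<phi> :: "'a::euclidean_space \<Rightarrow> real" and \<Phi> :: "'a \<times> 'a \<Rightarrow> real" and p :: real
  assumes \<phi>: "test_fun \<phi>" and \<Phi>: "test_fun \<Phi>" and p: "DIM('a) < p" "p < DIM('a) + 1"
  shows "integrable (lborel \<Otimes>\<^sub>M lborel)
           (\<lambda>z. \<phi> (fst z) * ((\<Phi> z - \<Phi> (fst z, fst z)) / norm (fst z - snd z) powr p))"
proof -
  define f where "f x y = (\<Phi> (x, y) - \<Phi> (x, x)) / norm (x - y) powr p" for x y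
  obtain B where int: "\<And>x. integrable lborel (\<lambda>h. diag_incr \<Phi> x h / norm h powr p)"
    and B: "\<And>x. (\<integral>h. \<bar>diag_incr \<Phi> x h / norm h powr p\<bar> \<partial>lborel) \<le> B"
    using diag_incr_div_integrable_bounded[OF \<Phi> p] by blast
  have [measurable]: "\<Phi> \<in> borel_measurable borel" "\<phi> \<in> borel_measurable borel"
    by (intro test_fun_borel_measurable \<Phi> \<phi>)+
  have f_meas [measurable]: "f x \<in> borel_measurable borel" for x
    unfolding f_def by measurable
  have shift: "f x (x + h) = diag_incr \<Phi> x h / norm h powr p" for x h
    by (simp add: f_def diag_incr_def)
  have f_int: "integrable lborel (f x)" for x
    using lborel_integral_translate(2)[OF f_meas[of x], of x] int by (simp add: shift)
  have f_abs: "(\<integral>y. \<bar>f x y\<bar> \<partial>lborel) \<le> B" for x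
    using lborel_integral_translate(1)[of "\<lambda>y. \<bar>f x y\<bar>" x] B[of x] by (simp add: shift)
  define H where "H z = \<phi> (fst z) * f (fst z) (snd z)" for z
  have H_meas [measurable]: "H \<in> borel_measurable (lborel \<Otimes>\<^sub>M lborel)"
  proof -
    have [measurable]: "\<Phi> \<in> borel_measurable (lborel \<Otimes>\<^sub>M lborel)"
      by (simp add: lborel_prod)
    show ?thesis
      unfolding H_def f_def by measurable
  qed
  have "integrable (lborel \<Otimes>\<^sub>M lborel) H"
  proof (rule lborel_pair.Fubini_integrable[OF H_meas])
    show "AE x in lborel. integrable lborel (\<lambda>y. H (x, y))"
      using f_int by (simp add: H_def)
    have "integrable lborel (\<lambda>x. \<bar>\<phi> x\<bar> * \<bar>B\<bar>)"
      using test_fun_integrable[OF \<phi>] by simp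
    then show "integrable lborel (\<lambda>x. \<integral>y. norm (H (x, y)) \<partial>lborel)"
    proof (rule Bochner_Integration.integrable_bound)
      show "(\<lambda>x. \<integral>y. norm (H (x, y)) \<partial>lborel) \<in> borel_measurable lborel"
        by measurable
      have "\<bar>\<phi> x\<bar> * (\<integral>y. \<bar>f x y\<bar> \<partial>lborel) \<le> \<bar>\<phi> x\<bar> * \<bar>B\<bar>" for x
        by (intro mult_left_mono order_trans[OF f_abs abs_ge_self]) simp
      then show "AE x in lborel. norm (\<integral>y. norm (H (x, y)) \<partial>lborel) \<le> norm (\<bar>\<phi> x\<bar> * \<bar>B\<bar>)"
        by (intro AE_I2) (simp add: H_def abs_mult)
    qed
  qed
  then show ?thesis
    by (simp add: H_def[abs_def] f_def)
qed

lemma integral_pair_eq_integral_nonlocal_div: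
  fixes \<phi> :: "'a::euclidean_space \<Rightarrow> real" and \<Phi> :: "'a \<times> 'a \<Rightarrow> real" and p :: real
  assumes \<phi>: "test_fun \<phi>" and \<Phi>: "test_fun \<Phi>" and p: "DIM('a) < p" "p < DIM('a) + 1"
  shows "(\<integral>z. \<phi> (fst z) * (\<Phi> z - \<Phi> (fst z, fst z)) / norm (fst z - snd z) powr p \<partial>lborel)
           = (\<integral>x. \<phi> x * nonlocal_div p \<Phi> x \<partial>lborel)"
proof -
  let ?H = "\<lambda>z. \<phi> (fst z) * ((\<Phi> z - \<Phi> (fst z, fst z)) / norm (fst z - snd z) powr p)"
  have "(\<integral>z. \<phi> (fst z) * (\<Phi> z - \<Phi> (fst z, fst z)) / norm (fst z - snd z) powr p \<partial>lborel)
          = (\<integral>z. ?H z \<partial>(lborel \<Otimes>\<^sub>M lborel))"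
    by (simp add: lborel_prod)
  also have "\<dots> = (\<integral>x. (\<integral>y. ?H (x, y) \<partial>lborel) \<partial>lborel)"
    by (rule lborel_pair.integral_fst'[OF integrable_pair_offdiag[OF assms], symmetric])
  also have "\<dots> = (\<integral>x. \<phi> x * nonlocal_div p \<Phi> x \<partial>lborel)"
    by (simp only: fst_conv snd_conv integral_mult_right_zero nonlocal_div_eq_integral[OF \<Phi>])
  finally show ?thesis .
qed

theorem proposition7p3:
  fixes s :: real and \<Phi> :: "(real^'n) \<times> (real^'n) \<Rightarrow> real"
    and T :: "(real^'n \<Rightarrow> real) \<Rightarrow> real"
    and S :: "((real^'n) \<times> (real^'n) \<Rightarrow> real) \<Rightarrow> real"
  assumes "0 < s" "s < 1/2"
    and "\<And>\<phi>. T \<phi> = (\<integral>x. \<phi> x \<partial>lborel)"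
    and "\<And>\<Theta>. S \<Theta> = (\<integral>z. (\<Theta> (fst z, snd z) - \<Theta> (fst z, fst z)) /
                     norm (fst z - snd z) powr (real CARD('n) + 2 * s) \<partial>lborel)"
    and "test_fun \<Phi>"
  shows "is_Kir T S \<Phi>
           (\<lambda>x. \<integral>y. (\<Phi> (x, y) - \<Phi> (x, x)) / norm (x - y) powr (real CARD('n) + 2 * s) \<partial>lborel)"
proof -
  define p where "p = real CARD('n) + 2 * s"
  have p: "DIM(real^'n) < p" "p < DIM(real^'n) + 1"
    using assms(1,2) by (simp_all add: p_def)
  have kir: "(\<lambda>x. \<integral>y. (\<Phi> (x, y) - \<Phi> (x, x)) / norm (x - y) powr (real CARD('n) + 2 * s) \<partial>lborel)
               = nonlocal_div p \<Phi>"
    by (intro ext) (simp add: nonlocal_div_eq_integral[OF assms(5)] p_def)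
  show ?thesis
    unfolding is_Kir_def kir
  proof (intro allI impI conjI)
    fix \<phi> :: "real^'n \<Rightarrow> real"
    assume \<phi>: "test_fun \<phi>"
    show "test_fun (\<lambda>x. \<phi> x * nonlocal_div p \<Phi> x)"
      by (rule test_fun_mult_smooth[OF \<phi> nonlocal_div_Ck[OF assms(5) p]])
    show "T (\<lambda>x. \<phi> x * nonlocal_div p \<Phi> x) = S (\<lambda>z. \<phi> (fst z) * \<Phi> z)"
      using integral_pair_eq_integral_nonlocal_div[OF \<phi> assms(5) p]
      by (simp add: assms(3,4) p_def right_diff_distrib)
  qed
qed

end
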